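(* Let $\delta_1>0$ be an admissible one-dimensional sum-product exponent, i.e. a constant such that every finite, non-empty set $B\subseteq\mathbb{R}$ satisfies $|B+B|+|B\cdot B|\gtrsim |B|^{1+\delta_1}$. Let $d\in\mathbb{N}$. Then for every finite, non-empty set $A$ of $d\times d$ diagonal matrices with real entries, \[ |A+A|+|A\cdot A| \gtrsim_d |A|^{1+\delta_1/d}, \] where $A+A$ and $A\cdot A$ are formed with ordinary matrix addition and multiplication.
   Context: For finite sets $A,B$ of matrices, $A+B=\{a+b: a\in A, b\in B\}$ and $A\cdot B=\{ab: a\in A,b\in B\}$. Notation: $X\gtrsim Y$ means $|X|\ge C|Y|(\log|A|)^{D}$ for some constants $C>0$ and $D$ (with $A$ the set under consideration); $X\gtrsim_z Y$ means the same with $C$ and $D$ allowed to depend on the parameter $z$. The paper takes $\delta_1$ to be the best known such exponent; by a result of Shakan, $\delta_1=1/3+5/5277$ is admissible. *)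

theory Defs
  imports "HOL-Analysis.Analysis"
begin

definition real_sumset :: "real set \<Rightarrow> real set" where
  "real_sumset B = {a + b | a b. a \<in> B \<and> b \<in> B}"

definition real_prodset :: "real set \<Rightarrow> real set" where
  "real_prodset B = {a * b | a b. a \<in> B \<and> b \<in> B}"

definition mat_sumset :: "(real^'n^'n) set \<Rightarrow> (real^'n^'n) set" where
  "mat_sumset A = {a + b | a b. a \<in> A \<and> b \<in> A}"

definition mat_prodset :: "(real^'n^'n) set \<Rightarrow> (real^'n^'n) set" where
  "mat_prodset A = {a ** b | a b. a \<in> A \<and> b \<in> A}"

definition diagonal_mat :: "real^'n^'n \<Rightarrow> bool" where
  "diagonal_mat M \<longleftrightarrow> (\<forall>i j. i \<noteq> j \<longrightarrow> M $ i $ j = 0)"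

text \<open>X \<gtrsim> Y: |X| \<ge> C |Y| (log |B|)^D for constants C > 0 and D.
  Admissible one-dimensional sum-product exponent.\<close>
definition sp_admissible :: "real \<Rightarrow> bool" where
  "sp_admissible \<delta> \<longleftrightarrow>
     (\<exists>C>0. \<exists>D::real. \<forall>B::real set. finite B \<and> B \<noteq> {} \<longrightarrow>
        real (card (real_sumset B)) + real (card (real_prodset B))
          \<ge> C * real (card B) powr (1 + \<delta>) * ln (real (card B)) powr D)"

end

theory Submission
  imports Defs "HOL-Library.Function_Algebras"
begin

text \<open>Vectors are functions \<open>'a \<Rightarrow> real\<close> with the pointwise operations of
  \<open>Function_Algebras\<close>; the diagonal of a diagonal matrix is such a vector, and matrix sums
  and products act on diagonals coordinatewise. By induction on the size \<open>d\<close> of the support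
  of \<open>A\<close> we show \<open>|A + A| + |A A| \<greatersim> |A|\<^bsup>1+\<delta>/d\<^esup>\<close>, tracking the losses as powers
  of \<open>1 + ln |A|\<close>. If at least half of \<open>A\<close> is nonzero in every coordinate, fix a coordinate
  \<open>i\<close> and pigeonhole a multiplicity \<open>t\<close> and a set \<open>T\<close> of \<open>n\<close> values of coordinate \<open>i\<close>,
  each taken at least \<open>t\<close> times, with \<open>n t \<greatersim> |A|\<close>. The one-dimensional bound for \<open>T\<close>,
  lifted through the fibres, gives \<open>t n\<^bsup>1+\<delta>\<^esup>\<close>; the induction hypothesis for the fibres,
  with coordinate \<open>i\<close> erased, gives \<open>n t\<^bsup>1+\<delta>/(d-1)\<^esup>\<close>; and the larger of the two is at least
  \<open>(n t)\<^bsup>1+\<delta>/d\<^esup>\<close>. Otherwise some coordinate vanishes on \<open>|A|/(2d)\<close> elements of \<open>A\<close>,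
  which are supported on \<open>d - 1\<close> coordinates.\<close>

section \<open>Sum sets and product sets\<close>

definition pairwise_image :: "('a \<Rightarrow> 'a \<Rightarrow> 'b) \<Rightarrow> 'a set \<Rightarrow> 'b set" where
  "pairwise_image f A = {f a b | a b. a \<in> A \<and> b \<in> A}"

definition sp_card :: "'a::{plus,times} set \<Rightarrow> real" where
  "sp_card A = real (card (pairwise_image (+) A)) + real (card (pairwise_image (*) A))"

lemma pairwise_image_eq_image: "pairwise_image f A = (\<lambda>(a, b). f a b) ` (A \<times> A)"
  unfolding pairwise_image_def by auto

lemma finite_pairwise_image: "finite A \<Longrightarrow> finite (pairwise_image f A)"
  by (simp add: pairwise_image_eq_image)

lemma pairwise_imageI: "a \<in> A \<Longrightarrow> b \<in> A \<Longrightarrow> f a b \<in> pairwise_image f A"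
  unfolding pairwise_image_def by blast

lemma pairwise_imageE:
  assumes "z \<in> pairwise_image f A"
  obtains a b where "a \<in> A" "b \<in> A" "z = f a b"
  using assms unfolding pairwise_image_def by blast

lemma pairwise_image_mono: "A \<subseteq> B \<Longrightarrow> pairwise_image f A \<subseteq> pairwise_image f B"
  unfolding pairwise_image_def by blast

lemma pairwise_image_eq_empty_iff [simp]: "pairwise_image f A = {} \<longleftrightarrow> A = {}"
  unfolding pairwise_image_def by blast

lemma pairwise_image_image:
  assumes "\<And>a b. a \<in> A \<Longrightarrow> b \<in> A \<Longrightarrow> h (f a b) = g (h a) (h b)"
  shows "pairwise_image g (h ` A) = h ` pairwise_image f A"
proof (intro equalityI subsetI)
  fix z assume "z \<in> pairwise_image g (h ` A)"
  then obtain x y where "x \<in> h ` A" "y \<in> h ` A" "z = g x y"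
    by (rule pairwise_imageE)
  then obtain a b where ab: "a \<in> A" "b \<in> A" "z = g (h a) (h b)"
    by blast
  then have "z = h (f a b)"
    using assms by simp
  then show "z \<in> h ` pairwise_image f A"
    using ab by (blast intro: pairwise_imageI)
next
  fix z assume "z \<in> h ` pairwise_image f A"
  then obtain a b where ab: "a \<in> A" "b \<in> A" "z = h (f a b)"
    by (blast elim: pairwise_imageE)
  then have "z = g (h a) (h b)"
    using assms by simp
  then show "z \<in> pairwise_image g (h ` A)"
    using ab by (blast intro: pairwise_imageI)
qed

lemma sp_card_nonneg [simp]: "0 \<le> sp_card A"
  unfolding sp_card_def by simp

lemma sp_card_mono:
  assumes "A \<subseteq> B" "finite B"
  shows "sp_card A \<le> sp_card B"
  unfolding sp_card_def
  using assms by (intro add_mono of_nat_mono card_mono finite_pairwise_image pairwise_image_mono)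

lemma sp_card_ge_1:
  assumes "finite A" "A \<noteq> {}"
  shows "1 \<le> sp_card A"
proof -
  have "0 < card (pairwise_image (+) A)"
    using assms by (simp add: card_gt_0_iff finite_pairwise_image)
  then show ?thesis
    unfolding sp_card_def by linarith
qed

lemma sp_card_image_le:
  assumes "finite A"
    and "\<And>a b. a \<in> A \<Longrightarrow> b \<in> A \<Longrightarrow> h (a + b) = h a + h b"
    and "\<And>a b. a \<in> A \<Longrightarrow> b \<in> A \<Longrightarrow> h (a * b) = h a * h b"
  shows "sp_card (h ` A) \<le> sp_card A"
proof -
  have "pairwise_image (+) (h ` A) = h ` pairwise_image (+) A"
    using assms(2) by (rule pairwise_image_image[where f = "(+)" and g = "(+)"])
  moreover have "pairwise_image (*) (h ` A) = h ` pairwise_image (*) A"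
    using assms(3) by (rule pairwise_image_image[where f = "(*)" and g = "(*)"])
  ultimately show ?thesis
    unfolding sp_card_def using assms(1)
    by (simp only:) (intro add_mono of_nat_mono card_image_le finite_pairwise_image)
qed

lemma sum_card_fibres_le:
  assumes "finite X" "finite T"
  shows "(\<Sum>s\<in>T. card {x\<in>X. p x = s}) \<le> card X"
proof -
  have "(\<Sum>s\<in>T. card {x\<in>X. p x = s}) = card (\<Union>s\<in>T. {x\<in>X. p x = s})"
    using assms by (intro card_UN_disjoint[symmetric]) auto
  also have "\<dots> \<le> card X"
    using assms by (intro card_mono) auto
  finally show ?thesis .
qed

lemma sum_card_fibres_eq:
  assumes "finite X"
  shows "(\<Sum>s\<in>p ` X. card {x\<in>X. p x = s}) = card X"
proof -
  have "(\<Sum>s\<in>p ` X. card {x\<in>X. p x = s}) = card (\<Union>s\<in>p ` X. {x\<in>X. p x = s})"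
    using assms by (intro card_UN_disjoint[symmetric]) auto
  also have "(\<Union>s\<in>p ` X. {x\<in>X. p x = s}) = X"
    by auto
  finally show ?thesis .
qed

lemma card_ge_mult_card_fibres:
  assumes "finite X" "finite T" "\<And>s. s \<in> T \<Longrightarrow> t \<le> card {x\<in>X. p x = s}"
  shows "t * card T \<le> card X"
proof -
  have "t * card T = (\<Sum>s\<in>T. t)"
    by simp
  also have "\<dots> \<le> (\<Sum>s\<in>T. card {x\<in>X. p x = s})"
    using assms(3) by (rule sum_mono)
  also have "\<dots> \<le> card X"
    using assms(1,2) by (rule sum_card_fibres_le)
  finally show ?thesis .
qed

lemma card_pairwise_image_ge_mult_fibres:
  assumes "finite A" "finite T"
    and hom: "\<And>a b. a \<in> A \<Longrightarrow> b \<in> A \<Longrightarrow> p (f a b) = g (p a) (p b)"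
    and cancel: "\<And>a b b'. a \<in> A \<Longrightarrow> b \<in> A \<Longrightarrow> b' \<in> A \<Longrightarrow> f a b = f a b' \<Longrightarrow> b = b'"
    and fibres: "\<And>x. x \<in> T \<Longrightarrow> t \<le> card {a\<in>A. p a = x}"
    and "t \<ge> 1"
  shows "t * card (pairwise_image g T) \<le> card (pairwise_image f A)"
proof (rule card_ge_mult_card_fibres[where p = p])
  fix s assume "s \<in> pairwise_image g T"
  then obtain x y where xy: "x \<in> T" "y \<in> T" "s = g x y"
    by (rule pairwise_imageE)
  have "0 < card {a\<in>A. p a = x}"
    using fibres[OF xy(1)] \<open>t \<ge> 1\<close> by linarith
  then have "{a\<in>A. p a = x} \<noteq> {}"
    by (metis card.empty less_irrefl)
  then obtain a where a: "a \<in> A" "p a = x"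
    by blast
  let ?Y = "f a ` {b\<in>A. p b = y}"
  have "t \<le> card {b\<in>A. p b = y}"
    using xy(2) by (rule fibres)
  also have "\<dots> = card ?Y"
    by (rule card_image[symmetric], rule inj_onI) (use a(1) cancel in blast)
  also have "\<dots> \<le> card {z\<in>pairwise_image f A. p z = s}"
  proof (rule card_mono)
    show "finite {z\<in>pairwise_image f A. p z = s}"
      using assms(1) by (simp add: finite_pairwise_image)
    show "?Y \<subseteq> {z\<in>pairwise_image f A. p z = s}"
      using a xy hom by (auto intro!: pairwise_imageI)
  qed
  finally show "t \<le> card {z\<in>pairwise_image f A. p z = s}" .
qed (use assms in \<open>auto intro: finite_pairwise_image\<close>)

lemma sum_card_pairwise_image_fibres_le:
  assumes "finite A" "finite T"
    and hom: "\<And>a b. a \<in> A \<Longrightarrow> b \<in> A \<Longrightarrow> p (f a b) = g (p a) (p b)"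
    and inj: "inj_on (\<lambda>x. g x x) T"
  shows "(\<Sum>x\<in>T. card (pairwise_image f {a\<in>A. p a = x})) \<le> card (pairwise_image f A)"
proof -
  let ?X = "pairwise_image f A"
  have "(\<Sum>x\<in>T. card (pairwise_image f {a\<in>A. p a = x})) \<le> (\<Sum>x\<in>T. card {z\<in>?X. p z = g x x})"
  proof (intro sum_mono card_mono)
    fix x
    show "finite {z\<in>?X. p z = g x x}"
      using assms(1) by (simp add: finite_pairwise_image)
    show "pairwise_image f {a\<in>A. p a = x} \<subseteq> {z\<in>?X. p z = g x x}"
      using hom by (auto elim!: pairwise_imageE intro: pairwise_imageI)
  qed
  also have "\<dots> = (\<Sum>s\<in>(\<lambda>x. g x x) ` T. card {z\<in>?X. p z = s})"
    by (simp add: sum.reindex[OF inj])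
  also have "\<dots> \<le> card ?X"
    using assms(1,2) by (intro sum_card_fibres_le finite_pairwise_image finite_imageI)
  finally show ?thesis .
qed

section \<open>Logarithmic weights and dyadic pigeonholing\<close>

text \<open>\<open>1 + ln N\<close> rather than \<open>ln N\<close>, which vanishes for singletons.\<close>

definition log_weight :: "nat \<Rightarrow> real" where
  "log_weight N = 1 + ln (real N)"

lemma log_weight_ge_1: "1 \<le> N \<Longrightarrow> 1 \<le> log_weight N"
  unfolding log_weight_def by simp

lemma log_weight_mono: "1 \<le> M \<Longrightarrow> M \<le> N \<Longrightarrow> log_weight M \<le> log_weight N"
  unfolding log_weight_def by simp

lemma log_weight_powr_mono:
  assumes "1 \<le> M" "M \<le> N" "0 \<le> E" "E \<le> E'"
  shows "log_weight M powr E \<le> log_weight N powr E'"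
proof -
  have "log_weight M powr E \<le> log_weight N powr E"
    using assms log_weight_ge_1[of M] log_weight_mono[of M N] by (intro powr_mono2) auto
  also have "\<dots> \<le> log_weight N powr E'"
    using assms log_weight_ge_1[of N] by (intro powr_mono) auto
  finally show ?thesis .
qed

lemma harm_le_log_weight: "1 \<le> N \<Longrightarrow> harm N \<le> log_weight N"
  using euler_mascheroni_sequence_decreasing[of 1 N] unfolding log_weight_def
  by (simp add: harm_expand)

lemma sum_card_superlevel_sets:
  fixes g :: "'b \<Rightarrow> nat"
  assumes "finite B" "\<And>x. x \<in> B \<Longrightarrow> g x \<le> N"
  shows "(\<Sum>t=1..N. card {x\<in>B. t \<le> g x}) = (\<Sum>x\<in>B. g x)"
proof -
  have "(\<Sum>t=1..N. card {x\<in>B. t \<le> g x}) = (\<Sum>t=1..N. \<Sum>x\<in>B. if t \<le> g x then 1 else 0)"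
    using assms(1) by (simp add: sum.If_cases Int_def conj_commute)
  also have "\<dots> = (\<Sum>x\<in>B. \<Sum>t=1..N. if t \<le> g x then 1 else 0)"
    by (rule sum.swap)
  also have "\<dots> = (\<Sum>x\<in>B. g x)"
  proof (rule sum.cong[OF refl])
    fix x assume "x \<in> B"
    then have "{1..N} \<inter> {t. t \<le> g x} = {1..g x}"
      using assms(2)[of x] by auto
    then show "(\<Sum>t=1..N. if t \<le> g x then 1 else 0) = g x"
      by (simp add: sum.If_cases)
  qed
  finally show ?thesis .
qed

text \<open>Dyadic pigeonholing with harmonic weights: since \<open>\<Sum>t\<le>N. 1/t \<le> 1 + ln N\<close>,
  some superlevel set of \<open>g\<close> carries a \<open>1/(1 + ln N)\<close> share of the total mass \<open>N\<close>.\<close>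

lemma exists_large_superlevel_set:
  fixes g :: "'b \<Rightarrow> nat"
  assumes "finite B"
  defines "N \<equiv> \<Sum>x\<in>B. g x"
  shows "\<exists>t\<ge>1. real N / log_weight N \<le> real t * real (card {x\<in>B. t \<le> g x})"
proof (cases "N = 0")
  case True
  then show ?thesis by auto
next
  case False
  then have N: "1 \<le> N" by simp
  have L: "0 < log_weight N"
    using log_weight_ge_1[OF N] by simp
  show ?thesis
  proof (rule ccontr)
    assume small: "\<not> ?thesis"
    have le: "g x \<le> N" if "x \<in> B" for x
      unfolding N_def using assms(1) that by (intro member_le_sum) auto
    have "(\<Sum>t=1..N. card {x\<in>B. t \<le> g x}) = N"
      using sum_card_superlevel_sets[OF assms(1) le] by (simp only: N_def)
    then have "real N = (\<Sum>t=1..N. real (card {x\<in>B. t \<le> g x}))"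
      by (metis of_nat_sum)
    also have "\<dots> < (\<Sum>t=1..N. real N / log_weight N * inverse (real t))"
    proof (rule sum_strict_mono)
      fix t assume "t \<in> {1..N}"
      then show "real (card {x\<in>B. t \<le> g x}) < real N / log_weight N * inverse (real t)"
        using small L by (auto simp: field_simps)
    qed (use N in auto)
    also have "\<dots> = real N / log_weight N * harm N"
      by (simp add: harm_def sum_distrib_left)
    also have "\<dots> \<le> real N / log_weight N * log_weight N"
      using harm_le_log_weight[OF N] L by (intro mult_left_mono) auto
    also have "\<dots> = real N"
      using L by simp
    finally show False by simp
  qed
qed

text \<open>If \<open>t \<le> n\<^sup>m\<close> the first term dominates, otherwise \<open>n < t\<^bsup>1/m\<^esup>\<close> and the second does;
  for \<open>m = 0\<close> the hypothesis \<open>t = 1\<close> is what the fibre sizes provide in dimension 1.\<close>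

lemma powr_mult_le_max:
  fixes n t \<delta> :: real and m :: nat
  assumes n: "1 \<le> n" and t: "1 \<le> t" and "0 < \<delta>" and t1: "m = 0 \<Longrightarrow> t = 1"
  shows "(n * t) powr (1 + \<delta> / real (Suc m))
    \<le> max (t * n powr (1 + \<delta>)) (n * t powr (1 + \<delta> / real (max m 1)))"
proof (cases "m = 0")
  case True
  then show ?thesis
    using t1 by simp
next
  case False
  define r where "r = real m"
  have r: "0 < r" "real (Suc m) = r + 1" "real (max m 1) = r"
    using False unfolding r_def by auto
  have split: "(n * t) powr (1 + \<delta> / (r + 1)) = n * t * (n * t) powr (\<delta> / (r + 1))"
    using n t by (simp add: powr_add)
  show ?thesis
  proof (cases "t \<le> n powr r")
    case True
    have "n * t \<le> n powr (r + 1)"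
      using True n by (simp add: powr_add)
    then have "(n * t) powr (\<delta> / (r + 1)) \<le> (n powr (r + 1)) powr (\<delta> / (r + 1))"
      using n t r(1) assms(3) by (intro powr_mono2) auto
    also have "\<dots> = n powr \<delta>"
      using r(1) by (simp add: powr_powr)
    finally have "(n * t) powr (1 + \<delta> / (r + 1)) \<le> t * n powr (1 + \<delta>)"
      unfolding split using n t by (simp add: powr_add mult_left_mono mult.commute mult.left_commute)
    then show ?thesis
      unfolding r by simp
  next
    case False
    have "n = (n powr r) powr (1 / r)"
      using n r(1) by (simp add: powr_powr)
    also have "\<dots> \<le> t powr (1 / r)"
      using False n r(1) by (intro powr_mono2) auto
    finally have "n * t \<le> t powr ((r + 1) / r)"
      using t r(1) by (simp add: powr_add add_divide_distrib mult_right_mono)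
    then have "(n * t) powr (\<delta> / (r + 1)) \<le> (t powr ((r + 1) / r)) powr (\<delta> / (r + 1))"
      using n t r(1) assms(3) by (intro powr_mono2) auto
    also have "\<dots> = t powr (\<delta> / r)"
      using r(1) by (simp add: powr_powr)
    finally have "(n * t) powr (1 + \<delta> / (r + 1)) \<le> n * t powr (1 + \<delta> / r)"
      unfolding split using n t by (simp add: powr_add mult_left_mono mult.commute mult.left_commute)
    then show ?thesis
      unfolding r by simp
  qed
qed

definition sp_lower_bound :: "real \<Rightarrow> real \<Rightarrow> real \<Rightarrow> 'a::{plus,times} set set \<Rightarrow> bool" where
  "sp_lower_bound c e E \<A> \<longleftrightarrow>
    (\<forall>A\<in>\<A>. c * real (card A) powr e \<le> log_weight (card A) powr E * sp_card A)"

lemma sp_lower_boundD: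
  "sp_lower_bound c e E \<A> \<Longrightarrow> A \<in> \<A> \<Longrightarrow>
    c * real (card A) powr e \<le> log_weight (card A) powr E * sp_card A"
  unfolding sp_lower_bound_def by blast

lemma sp_bound_from_large_subset:
  assumes "X \<subseteq> A" "finite A" "X \<noteq> {}" "card A \<le> k * card X" "0 < k" "0 \<le> c" "0 \<le> e" "0 \<le> E"
    and "c * real (card X) powr e \<le> log_weight (card X) powr E * sp_card X"
  shows "c / real k powr e * real (card A) powr e \<le> log_weight (card A) powr E * sp_card A"
proof -
  have X: "1 \<le> card X"
    using assms(1-3) by (simp add: Suc_le_eq card_gt_0_iff finite_subset)
  have "real (card A) / real k \<le> real (card X)"
    using assms(4,5) by (simp add: field_simps flip: of_nat_mult)
  then have "c * (real (card A) / real k) powr e \<le> c * real (card X) powr e"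
    using assms(6,7) by (intro mult_left_mono powr_mono2) auto
  then have "c / real k powr e * real (card A) powr e \<le> c * real (card X) powr e"
    by (simp add: powr_divide)
  also have "\<dots> \<le> log_weight (card X) powr E * sp_card X"
    by (fact assms(9))
  also have "\<dots> \<le> log_weight (card A) powr E * sp_card A"
    using assms X by (intro mult_mono log_weight_powr_mono sp_card_mono card_mono) auto
  finally show ?thesis .
qed

lemma log_weight_bound_weaken:
  assumes "c' * X \<le> log_weight N powr E * S"
    and "0 \<le> c" "c \<le> c'" "0 \<le> X" "1 \<le> N" "0 \<le> E" "E \<le> E'" "0 \<le> S"
  shows "c * X \<le> log_weight N powr E' * S"
proof -
  have "c * X \<le> c' * X"
    using assms(3,4) by (rule mult_right_mono)
  also have "\<dots> \<le> log_weight N powr E * S"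
    by (fact assms(1))
  also have "\<dots> \<le> log_weight N powr E' * S"
    using assms(5-8) by (intro mult_right_mono log_weight_powr_mono) auto
  finally show ?thesis .
qed

section \<open>Finitely supported vectors\<close>

definition supported_on :: "'a set \<Rightarrow> ('a \<Rightarrow> real) set \<Rightarrow> bool" where
  "supported_on I A \<longleftrightarrow> (\<forall>a\<in>A. \<forall>j. j \<notin> I \<longrightarrow> a j = 0)"

definition supported_sets :: "nat \<Rightarrow> ('a \<Rightarrow> real) set set" where
  "supported_sets d = {A. finite A \<and> A \<noteq> {} \<and> (\<exists>I. finite I \<and> card I = d \<and> supported_on I A)}"

lemma supported_setsI:
  "finite I \<Longrightarrow> card I = d \<Longrightarrow> finite A \<Longrightarrow> A \<noteq> {} \<Longrightarrow> supported_on I A \<Longrightarrow> A \<in> supported_sets d"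
  unfolding supported_sets_def by blast

lemma card_le_1_if_supported_on_empty:
  assumes "supported_on {} A"
  shows "card A \<le> 1"
proof -
  have "A \<subseteq> {0}"
    using assms unfolding supported_on_def by (auto simp: fun_eq_iff)
  then have "card A \<le> card {0 :: 'a \<Rightarrow> real}"
    by (intro card_mono) auto
  then show ?thesis
    by simp
qed

lemma card_coordinate_fibre_le_1:
  fixes A :: "('a \<Rightarrow> real) set"
  assumes "supported_on {i} A"
  shows "card {a\<in>A. a i = x} \<le> 1"
proof -
  have "{a\<in>A. a i = x} \<subseteq> {(\<lambda>_. 0)(i := x)}"
    using assms unfolding supported_on_def by (auto simp: fun_eq_iff)
  then have "card {a\<in>A. a i = x} \<le> card {(\<lambda>_. 0 :: real)(i := x)}"
    by (intro card_mono) auto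
  then show ?thesis
    by simp
qed

text \<open>Adding, or multiplying by, an element of the fibre over \<open>x\<close> maps the fibre over \<open>y\<close>
  injectively into the sum or product set; for products this needs the nonvanishing coordinates.\<close>

lemma sp_card_ge_mult_coordinate_fibres:
  fixes A :: "('a \<Rightarrow> real) set" and T :: "real set"
  assumes "finite A" "finite T" "supported_on I A"
    and nonzero: "\<forall>a\<in>A. \<forall>j\<in>I. a j \<noteq> 0"
    and fibres: "\<And>x. x \<in> T \<Longrightarrow> t \<le> card {a\<in>A. a i = x}" and "1 \<le> t"
  shows "real t * sp_card T \<le> sp_card A"
proof -
  have cancel: "b = b'" if "a \<in> A" "b \<in> A" "b' \<in> A" "a * b = a * b'" for a b b'
  proof
    fix j
    show "b j = b' j"
    proof (cases "j \<in> I")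
      case True
      then have "a j \<noteq> 0"
        using nonzero that(1) by blast
      then show ?thesis
        using fun_cong[OF that(4), of j] by simp
    next
      case False
      then have "b j = 0" "b' j = 0"
        using assms(3) that(2,3) unfolding supported_on_def by blast+
      then show ?thesis
        by simp
    qed
  qed
  have "t * card (pairwise_image (+) T) \<le> card (pairwise_image (+) A)"
    by (rule card_pairwise_image_ge_mult_fibres[where p = "\<lambda>a. a i"]) (use assms in auto)
  moreover have "t * card (pairwise_image (*) T) \<le> card (pairwise_image (*) A)"
    by (rule card_pairwise_image_ge_mult_fibres[where p = "\<lambda>a. a i"]) (use assms cancel in auto)
  ultimately show ?thesis
    unfolding sp_card_def distrib_left by (intro add_mono) (simp_all flip: of_nat_mult)
qed

lemma inj_on_square_same_sign:
  fixes S :: "real set"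
  assumes "\<And>x y. x \<in> S \<Longrightarrow> y \<in> S \<Longrightarrow> 0 < x * y"
  shows "inj_on (\<lambda>x. x * x) S"
proof (rule inj_onI)
  fix x y assume xy: "x \<in> S" "y \<in> S" "x * x = y * y"
  then have "(x - y) * (x + y) = 0"
    by (simp add: algebra_simps)
  moreover have "x + y \<noteq> 0"
    using assms[OF xy(1,2)] by (auto simp: add_eq_0_iff)
  ultimately show "x = y"
    by simp
qed

text \<open>Distinct values \<open>x\<close> give distinct sums \<open>x + x\<close>, and distinct products \<open>x x\<close> among values
  of the same sign; hence the factor 2.\<close>

lemma sum_sp_card_coordinate_fibres_le:
  fixes A :: "('a \<Rightarrow> real) set"
  assumes "finite A" "finite T" "0 \<notin> T"
  shows "(\<Sum>x\<in>T. sp_card {a\<in>A. a i = x}) \<le> 2 * sp_card A"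
proof -
  let ?G = "\<lambda>x. {a\<in>A. a i = x}"
  have sums: "(\<Sum>x\<in>T. card (pairwise_image (+) (?G x))) \<le> card (pairwise_image (+) A)"
    by (rule sum_card_pairwise_image_fibres_le) (use assms in \<open>auto simp: inj_on_def\<close>)
  have prods_on: "(\<Sum>x\<in>S. card (pairwise_image (*) (?G x))) \<le> card (pairwise_image (*) A)"
    if "S \<subseteq> T" "\<And>x y. x \<in> S \<Longrightarrow> y \<in> S \<Longrightarrow> 0 < x * y" for S
    using assms(1) finite_subset[OF that(1) assms(2)]
    by (rule sum_card_pairwise_image_fibres_le) (auto intro: inj_on_square_same_sign that)
  have "x \<noteq> 0" if "x \<in> T" for x
    using assms(3) that by auto
  then have "T = {x\<in>T. 0 < x} \<union> {x\<in>T. x < 0}"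
    by (auto simp: neq_iff)
  then have "(\<Sum>x\<in>T. card (pairwise_image (*) (?G x)))
      = (\<Sum>x\<in>{x\<in>T. 0 < x}. card (pairwise_image (*) (?G x)))
        + (\<Sum>x\<in>{x\<in>T. x < 0}. card (pairwise_image (*) (?G x)))"
    using assms(2) by (metis (no_types, lifting) sum.union_disjoint finite_Un disjoint_iff mem_Collect_eq not_less_iff_gr_or_eq)
  also have "\<dots> \<le> 2 * card (pairwise_image (*) A)"
    using prods_on[of "{x\<in>T. 0 < x}"] prods_on[of "{x\<in>T. x < 0}"] by (simp add: mult_neg_neg)
  finally have prods: "(\<Sum>x\<in>T. card (pairwise_image (*) (?G x))) \<le> 2 * card (pairwise_image (*) A)" .
  show ?thesis
    unfolding sp_card_def sum.distrib
    using sums prods by (simp flip: of_nat_sum)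
qed

lemma sp_card_fun_upd_zero_le:
  fixes A :: "('a \<Rightarrow> real) set"
  assumes "finite A"
  shows "sp_card ((\<lambda>a. a(i := 0)) ` A) \<le> sp_card A"
  by (rule sp_card_image_le) (use assms in \<open>auto simp: fun_eq_iff\<close>)

lemma exists_coordinate_with_many_zeros:
  fixes A :: "('a \<Rightarrow> 'b::zero) set"
  assumes "finite A" "finite I" "2 * card {a\<in>A. \<forall>j\<in>I. a j \<noteq> 0} < card A"
  shows "\<exists>j\<in>I. card A \<le> 2 * card I * card {a\<in>A. a j = 0}"
proof (rule ccontr)
  let ?As = "{a\<in>A. \<forall>j\<in>I. a j \<noteq> 0}" and ?Z = "\<lambda>j. {a\<in>A. a j = 0}"
  assume "\<not> ?thesis"
  then have few: "2 * card I * card (?Z j) < card A" if "j \<in> I" for j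
    using that by auto
  have "I \<noteq> {}"
    using assms(3) by auto
  have "card (A - ?As) \<le> card (\<Union>j\<in>I. ?Z j)"
    using assms(1,2) by (intro card_mono) auto
  also have "\<dots> \<le> (\<Sum>j\<in>I. card (?Z j))"
    using assms(2) by (rule card_UN_le)
  finally have "2 * card I * card (A - ?As) \<le> (\<Sum>j\<in>I. 2 * card I * card (?Z j))"
    using mult_le_mono2 by (simp add: sum_distrib_left[symmetric])
  also have "\<dots> < (\<Sum>j\<in>I. card A)"
    using assms(2) \<open>I \<noteq> {}\<close> few by (rule sum_strict_mono)
  also have "\<dots> = card I * card A"
    by simp
  finally have "card I * (2 * card (A - ?As)) < card I * card A"
    by (simp add: ac_simps)
  then have "2 * card (A - ?As) < card A"
    by simp
  moreover have "card (A - ?As) = card A - card ?As" "card ?As \<le> card A"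
    using assms(1) by (simp_all add: card_Diff_subset card_mono)
  ultimately show False
    using assms(3) by linarith
qed

lemma sp_card_coordinate_fibre_lower:
  fixes A :: "('a \<Rightarrow> real) set"
  assumes lower_dim: "sp_lower_bound c' e' E' (supported_sets m :: ('a \<Rightarrow> real) set set)"
    and "0 \<le> c'" "0 \<le> e'" "0 \<le> E'"
    and I: "finite I" "card I = Suc m" "i \<in> I"
    and A: "finite A" "supported_on I A"
    and t: "1 \<le> t" "t \<le> card {a\<in>A. a i = x}"
  shows "c' * real t powr e' \<le> log_weight (card A) powr E' * sp_card {a\<in>A. a i = x}"
proof -
  let ?G = "{a\<in>A. a i = x}"
  let ?F = "(\<lambda>a. a(i := 0)) ` ?G"
  have "card ?F = card ?G"
    by (intro card_image inj_onI) (auto simp: fun_eq_iff, metis fun_upd_apply)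
  then have F: "t \<le> card ?F" "card ?F \<le> card A"
    using t A(1) by (auto intro: card_mono)
  have "0 < card ?F"
    using F(1) t(1) by linarith
  then have "finite ?F \<and> ?F \<noteq> {}"
    by (simp only: card_gt_0_iff simp_thms)
  moreover have "supported_on (I - {i}) ?F"
    using A(2) unfolding supported_on_def by auto
  ultimately have F_supported: "?F \<in> supported_sets m"
    using I by (intro supported_setsI[of "I - {i}"]) auto
  have "c' * real t powr e' \<le> c' * real (card ?F) powr e'"
    using F(1) assms(2,3) by (intro mult_left_mono powr_mono2) auto
  also have "\<dots> \<le> log_weight (card ?F) powr E' * sp_card ?F"
    using lower_dim F_supported by (rule sp_lower_boundD)
  also have "\<dots> \<le> log_weight (card A) powr E' * sp_card ?G"
    using F t A(1) assms(4) by (intro mult_mono log_weight_powr_mono sp_card_fun_upd_zero_le) auto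
  finally show ?thesis .
qed

lemma sp_card_lower_from_fibres:
  fixes A :: "('a \<Rightarrow> real) set"
  assumes lower_dim: "sp_lower_bound c' e' E' (supported_sets m :: ('a \<Rightarrow> real) set set)"
    and "0 \<le> c'" "0 \<le> e'" "0 \<le> E'"
    and I: "finite I" "card I = Suc m" "i \<in> I"
    and A: "finite A" "supported_on I A"
    and T: "finite T" "0 \<notin> T"
    and fibres: "\<And>x. x \<in> T \<Longrightarrow> t \<le> card {a\<in>A. a i = x}" and "1 \<le> t"
  shows "c' * (real (card T) * real t powr e') \<le> 2 * (log_weight (card A) powr E' * sp_card A)"
proof -
  have "c' * (real (card T) * real t powr e') = (\<Sum>x\<in>T. c' * real t powr e')"
    by simp
  also have "\<dots> \<le> (\<Sum>x\<in>T. log_weight (card A) powr E' * sp_card {a\<in>A. a i = x})"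
    by (rule sum_mono, rule sp_card_coordinate_fibre_lower[OF lower_dim assms(2-4) I A \<open>1 \<le> t\<close> fibres])
  also have "\<dots> = log_weight (card A) powr E' * (\<Sum>x\<in>T. sp_card {a\<in>A. a i = x})"
    by (simp add: sum_distrib_left)
  also have "\<dots> \<le> log_weight (card A) powr E' * (2 * sp_card A)"
    using A(1) T by (intro mult_left_mono sum_sp_card_coordinate_fibres_le) auto
  finally show ?thesis
    by (simp add: ac_simps)
qed

lemma sp_card_lower_from_coordinate_values:
  fixes A :: "('a \<Rightarrow> real) set" and T :: "real set"
  assumes one_dim: "sp_lower_bound c1 e1 E1 {B::real set. finite B \<and> B \<noteq> {}}"
    and "0 \<le> E1"
    and A: "finite A" "supported_on I A" "\<forall>a\<in>A. \<forall>j\<in>I. a j \<noteq> 0"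
    and T: "finite T" "T \<noteq> {}" "card T \<le> card A"
    and fibres: "\<And>x. x \<in> T \<Longrightarrow> t \<le> card {a\<in>A. a i = x}" and "1 \<le> t"
  shows "c1 * (real t * real (card T) powr e1) \<le> log_weight (card A) powr E1 * sp_card A"
proof -
  have "c1 * real (card T) powr e1 \<le> log_weight (card T) powr E1 * sp_card T"
    using T by (intro sp_lower_boundD[OF one_dim]) auto
  also have "\<dots> \<le> log_weight (card A) powr E1 * sp_card T"
    using T assms(2) by (intro mult_right_mono log_weight_powr_mono) (auto simp: Suc_le_eq card_gt_0_iff)
  finally have "real t * (c1 * real (card T) powr e1) \<le> real t * (log_weight (card A) powr E1 * sp_card T)"
    by (rule mult_left_mono) simp
  also have "\<dots> = log_weight (card A) powr E1 * (real t * sp_card T)"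
    by (simp only: ac_simps)
  also have "\<dots> \<le> log_weight (card A) powr E1 * sp_card A"
    using A T(1) fibres \<open>1 \<le> t\<close> by (intro mult_left_mono sp_card_ge_mult_coordinate_fibres) auto
  finally show ?thesis
    by (simp only: ac_simps)
qed

text \<open>The one-dimensional bound for the popular values \<open>T\<close> of coordinate \<open>i\<close> and the bound for
  the fibres in dimension \<open>m\<close> give \<open>t n\<^bsup>1+\<delta>\<^esup>\<close> and \<open>n t\<^bsup>1+\<delta>/m\<^esup>\<close>, where \<open>n = card T\<close>;
  by \<open>powr_mult_le_max\<close> one of them dominates \<open>(n t)\<^bsup>1+\<delta>/(m+1)\<^esup>\<close>.\<close>

lemma sp_card_lower_level:
  fixes A :: "('a \<Rightarrow> real) set" and \<delta> c1 E1 c' E' :: real and m :: nat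
  defines "e \<equiv> 1 + \<delta> / real (Suc m)" and "e' \<equiv> 1 + \<delta> / real (max m 1)"
  assumes "0 < \<delta>" "0 < c1" "0 \<le> E1" "0 < c'" "0 \<le> E'"
    and one_dim: "sp_lower_bound c1 (1 + \<delta>) E1 {B::real set. finite B \<and> B \<noteq> {}}"
    and lower_dim: "sp_lower_bound c' e' E' (supported_sets m :: ('a \<Rightarrow> real) set set)"
    and I: "finite I" "card I = Suc m" "i \<in> I"
    and A: "finite A" "supported_on I A"
    and nonzero: "\<forall>a\<in>A. \<forall>j\<in>I. a j \<noteq> 0"
    and T: "finite T" "T \<noteq> {}" "0 \<notin> T" "card T \<le> card A"
    and fibres: "\<And>x. x \<in> T \<Longrightarrow> t \<le> card {a\<in>A. a i = x}" and t: "1 \<le> t"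
  shows "min c1 (c' / 2) * (real (card T) * real t) powr e
    \<le> log_weight (card A) powr (max E1 E') * sp_card A"
proof -
  define n c0 E0 where "n = real (card T)" and "c0 = min c1 (c' / 2)" and "E0 = max E1 E'"
  have n: "1 \<le> n" "1 \<le> card A"
    using T A(1) unfolding n_def by (auto simp: Suc_le_eq card_gt_0_iff)
  have "c1 * (real t * n powr (1 + \<delta>)) \<le> log_weight (card A) powr E1 * sp_card A"
    unfolding n_def
    by (rule sp_card_lower_from_coordinate_values[OF one_dim assms(5) A nonzero T(1,2,4) fibres t])
  then have bound1: "c0 * (real t * n powr (1 + \<delta>)) \<le> log_weight (card A) powr E0 * sp_card A"
    unfolding c0_def E0_def by (rule log_weight_bound_weaken) (use assms(4,5,6) n in auto)
  have "c' * (n * real t powr e') \<le> 2 * (log_weight (card A) powr E' * sp_card A)"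
    unfolding n_def
    by (rule sp_card_lower_from_fibres[OF lower_dim _ _ assms(7) I A T(1,3) fibres t])
       (use assms(3,6) in \<open>auto simp: e'_def\<close>)
  moreover have "c' / 2 * (n * real t powr e') = c' * (n * real t powr e') / 2"
    by simp
  ultimately have "c' / 2 * (n * real t powr e') \<le> log_weight (card A) powr E' * sp_card A"
    by linarith
  then have bound2: "c0 * (n * real t powr e') \<le> log_weight (card A) powr E0 * sp_card A"
    unfolding c0_def E0_def by (rule log_weight_bound_weaken) (use assms(4,6,7) n in auto)
  have t1: "t = 1" if m0: "m = 0"
  proof -
    obtain k where "I = {k}"
      using I(2) m0 by (auto simp: card_Suc_eq)
    then have "supported_on {i} A"
      using A(2) I(3) by simp
    obtain x where "x \<in> T"
      using T(2) by blast
    then have "t \<le> card {a\<in>A. a i = x}"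
      by (rule fibres)
    also have "\<dots> \<le> 1"
      using \<open>supported_on {i} A\<close> by (rule card_coordinate_fibre_le_1)
    finally show "t = 1"
      using t by simp
  qed
  have "(n * real t) powr e \<le> max (real t * n powr (1 + \<delta>)) (n * real t powr e')"
    unfolding e_def e'_def using n(1) t assms(3) t1 by (intro powr_mult_le_max) auto
  then have "c0 * (n * real t) powr e \<le> c0 * max (real t * n powr (1 + \<delta>)) (n * real t powr e')"
    unfolding c0_def using assms(4,6) by (intro mult_left_mono) auto
  also have "\<dots> \<le> log_weight (card A) powr E0 * sp_card A"
    using bound1 bound2 by (simp add: max_def)
  finally show ?thesis
    unfolding n_def c0_def E0_def .
qed

lemma exists_popular_coordinate_values:
  fixes A :: "('a \<Rightarrow> real) set"
  assumes "finite A" "A \<noteq> {}"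
  obtains t T where "1 \<le> t" "finite T" "T \<noteq> {}" "T \<subseteq> (\<lambda>a. a i) ` A" "card T \<le> card A"
    "\<And>x. x \<in> T \<Longrightarrow> t \<le> card {a\<in>A. a i = x}"
    "real (card A) \<le> log_weight (card A) * (real (card T) * real t)"
proof -
  define G where "G x = {a\<in>A. a i = x}" for x
  have L: "1 \<le> log_weight (card A)"
    using assms by (intro log_weight_ge_1) (simp add: Suc_le_eq card_gt_0_iff)
  have "(\<Sum>x\<in>(\<lambda>a. a i) ` A. card (G x)) = card A"
    unfolding G_def using assms(1) by (rule sum_card_fibres_eq)
  then obtain t where t: "1 \<le> t"
    and level: "real (card A) / log_weight (card A) \<le> real t * real (card {x\<in>(\<lambda>a. a i) ` A. t \<le> card (G x)})"
    using exists_large_superlevel_set[of "(\<lambda>a. a i) ` A" "\<lambda>x. card (G x)"] assms(1) by auto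
  define T where "T = {x\<in>(\<lambda>a. a i) ` A. t \<le> card (G x)}"
  have NL: "real (card A) \<le> log_weight (card A) * (real (card T) * real t)"
    using level L unfolding T_def by (simp add: field_simps)
  have T_ne: "T \<noteq> {}"
  proof
    assume "T = {}"
    with NL have "card A = 0"
      by simp
    with assms show False
      by (simp add: card_eq_0_iff)
  qed
  have T_sub: "T \<subseteq> (\<lambda>a. a i) ` A"
    unfolding T_def by blast
  have "card T \<le> card ((\<lambda>a. a i) ` A)"
    using T_sub assms(1) by (intro card_mono) auto
  also have "\<dots> \<le> card A"
    using assms(1) by (rule card_image_le)
  finally have T_le: "card T \<le> card A" .
  have fibres: "t \<le> card {a\<in>A. a i = x}" if "x \<in> T" for x
    using that unfolding T_def G_def by auto
  have "finite T"
    by (rule finite_subset[OF T_sub finite_imageI[OF assms(1)]])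
  then show ?thesis
    by (rule that[OF t _ T_ne T_sub T_le fibres NL])
qed

lemma sp_card_lower_nonvanishing:
  fixes A :: "('a \<Rightarrow> real) set" and \<delta> c1 E1 c' E' :: real and m :: nat
  defines "e \<equiv> 1 + \<delta> / real (Suc m)" and "e' \<equiv> 1 + \<delta> / real (max m 1)"
  assumes "0 < \<delta>" "0 < c1" "0 \<le> E1" "0 < c'" "0 \<le> E'"
    and one_dim: "sp_lower_bound c1 (1 + \<delta>) E1 {B::real set. finite B \<and> B \<noteq> {}}"
    and lower_dim: "sp_lower_bound c' e' E' (supported_sets m :: ('a \<Rightarrow> real) set set)"
    and I: "finite I" "card I = Suc m"
    and A: "finite A" "A \<noteq> {}" "supported_on I A"
    and nonzero: "\<forall>a\<in>A. \<forall>j\<in>I. a j \<noteq> 0"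
  shows "min c1 (c' / 2) * real (card A) powr e
    \<le> log_weight (card A) powr (max E1 E' + e) * sp_card A"
proof -
  obtain i where i: "i \<in> I"
    using I by fastforce
  obtain t T where t: "1 \<le> t" and T: "finite T" "T \<noteq> {}" "T \<subseteq> (\<lambda>a. a i) ` A" "card T \<le> card A"
    and fibres: "\<And>x. x \<in> T \<Longrightarrow> t \<le> card {a\<in>A. a i = x}"
    and NL: "real (card A) \<le> log_weight (card A) * (real (card T) * real t)"
    using exists_popular_coordinate_values[where i = i, OF A(1,2)] by blast
  have "0 \<notin> T"
    using T(3) nonzero i by auto
  define L where "L = log_weight (card A)"
  have L: "1 \<le> L"
    unfolding L_def using A by (intro log_weight_ge_1) (simp add: Suc_le_eq card_gt_0_iff)
  have "min c1 (c' / 2) * real (card A) powr e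
      \<le> min c1 (c' / 2) * (L * (real (card T) * real t)) powr e"
    using NL assms(3,4,6) unfolding L_def by (intro mult_left_mono powr_mono2) (auto simp: e_def)
  also have "\<dots> = L powr e * (min c1 (c' / 2) * (real (card T) * real t) powr e)"
    using L by (simp add: powr_mult)
  also have "\<dots> \<le> L powr e * (L powr (max E1 E') * sp_card A)"
  proof (rule mult_left_mono)
    show "min c1 (c' / 2) * (real (card T) * real t) powr e \<le> L powr (max E1 E') * sp_card A"
      using sp_card_lower_level[OF assms(3-7) one_dim lower_dim[unfolded e'_def] I i A(1,3) nonzero
            T(1,2) \<open>0 \<notin> T\<close> T(4) fibres t]
      by (simp only: L_def e_def)
  qed simp
  also have "\<dots> = L powr (max E1 E' + e) * sp_card A"
    using L by (simp add: powr_add)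
  finally show ?thesis
    unfolding L_def .
qed

lemma sp_card_lower_vanishing_coordinate:
  fixes Z :: "('a \<Rightarrow> real) set"
  assumes lower_dim: "sp_lower_bound c' e' E' (supported_sets m :: ('a \<Rightarrow> real) set set)"
    and "0 \<le> c" "c \<le> c'" "0 \<le> e" "e \<le> e'" "0 \<le> E'" "E' \<le> E"
    and I: "finite I" "card I = Suc m" "j \<in> I"
    and Z: "finite Z" "Z \<noteq> {}" "supported_on I Z" "\<forall>a\<in>Z. a j = 0"
  shows "c * real (card Z) powr e \<le> log_weight (card Z) powr E * sp_card Z"
proof -
  have "1 \<le> card Z"
    using Z by (simp add: Suc_le_eq card_gt_0_iff)
  have "supported_on (I - {j}) Z"
    using Z(3,4) unfolding supported_on_def by auto
  then have "Z \<in> supported_sets m"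
    using I Z(1,2) by (intro supported_setsI[of "I - {j}"]) auto
  have "c * real (card Z) powr e \<le> c' * real (card Z) powr e'"
    using \<open>1 \<le> card Z\<close> assms(2-5) by (intro mult_mono powr_mono) auto
  also have "\<dots> \<le> log_weight (card Z) powr E' * sp_card Z"
    using lower_dim \<open>Z \<in> supported_sets m\<close> by (rule sp_lower_boundD)
  also have "\<dots> \<le> log_weight (card Z) powr E * sp_card Z"
    using \<open>1 \<le> card Z\<close> assms(6,7) by (intro mult_right_mono log_weight_powr_mono) auto
  finally show ?thesis .
qed

text \<open>Either at least half of \<open>A\<close> is nonzero in every coordinate, or some coordinate
  vanishes on a \<open>1/(2 (m + 1))\<close> share of \<open>A\<close>; in both cases the bound holds for that part.\<close>

lemma exists_large_subset_sp_bound: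
  fixes A :: "('a \<Rightarrow> real) set" and \<delta> c1 E1 c' E' :: real and m :: nat
  defines "e \<equiv> 1 + \<delta> / real (Suc m)" and "e' \<equiv> 1 + \<delta> / real (max m 1)"
  assumes "0 < \<delta>" "0 < c1" "0 \<le> E1" "0 < c'" "0 \<le> E'"
    and one_dim: "sp_lower_bound c1 (1 + \<delta>) E1 {B::real set. finite B \<and> B \<noteq> {}}"
    and lower_dim: "sp_lower_bound c' e' E' (supported_sets m :: ('a \<Rightarrow> real) set set)"
    and I: "finite I" "card I = Suc m"
    and A: "finite A" "A \<noteq> {}" "supported_on I A"
  obtains X where "X \<subseteq> A" "X \<noteq> {}" "card A \<le> 2 * Suc m * card X"
    "min c1 (c' / 2) * real (card X) powr e \<le> log_weight (card X) powr (max E1 E' + e) * sp_card X"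
proof -
  define c0 E0 where "c0 = min c1 (c' / 2)" and "E0 = max E1 E' + e"
  have c0: "0 \<le> c0" "c0 \<le> c'"
    unfolding c0_def using assms(4,6) by auto
  have e: "0 \<le> e" "e \<le> e'"
    unfolding e_def e'_def using assms(3) by (auto simp: frac_le)
  have E0: "0 \<le> E0" "E' \<le> E0"
    unfolding E0_def using e(1) assms(7) max.cobounded2[of E1 E'] by linarith+
  define As where "As = {a\<in>A. \<forall>j\<in>I. a j \<noteq> 0}"
  show ?thesis
  proof (cases "card A \<le> 2 * card As")
    case True
    have As_ne: "As \<noteq> {}"
      using True A by (auto simp: card_gt_0_iff)
    have As: "As \<subseteq> A" "finite As" "supported_on I As" "\<forall>a\<in>As. \<forall>j\<in>I. a j \<noteq> 0"
      using A unfolding As_def supported_on_def by auto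
    have "2 * card As \<le> 2 * Suc m * card As"
      by simp
    then have card_As: "card A \<le> 2 * Suc m * card As"
      using True by linarith
    have "c0 * real (card As) powr e \<le> log_weight (card As) powr E0 * sp_card As"
      using sp_card_lower_nonvanishing[OF assms(3-7) one_dim lower_dim[unfolded e'_def] I As(2) As_ne As(3,4)]
      by (simp only: c0_def E0_def e_def)
    with As(1) As_ne card_As show ?thesis
      unfolding c0_def E0_def by (rule that)
  next
    case False
    then obtain j where j: "j \<in> I" and many: "card A \<le> 2 * card I * card {a\<in>A. a j = 0}"
      using exists_coordinate_with_many_zeros[OF A(1) I(1)] unfolding As_def by auto
    define Z where "Z = {a\<in>A. a j = 0}"
    have Z_ne: "Z \<noteq> {}"
    proof
      assume "Z = {}"
      with many have "card A = 0"
        unfolding Z_def by simp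
      with A show False
        by (simp add: card_eq_0_iff)
    qed
    have Z: "Z \<subseteq> A" "finite Z" "supported_on I Z" "\<forall>a\<in>Z. a j = 0"
      using A unfolding Z_def supported_on_def by auto
    have card_Z: "card A \<le> 2 * Suc m * card Z"
      using many I(2) unfolding Z_def by simp
    have "c0 * real (card Z) powr e \<le> log_weight (card Z) powr E0 * sp_card Z"
      by (rule sp_card_lower_vanishing_coordinate[OF lower_dim c0 e assms(7) E0(2) I(1,2) j Z(2) Z_ne Z(3,4)])
    with Z(1) Z_ne card_Z show ?thesis
      unfolding c0_def E0_def by (rule that)
  qed
qed

lemma sp_lower_bound_supported_sets_Suc:
  fixes \<delta> c1 E1 c' E' :: real and m :: nat
  defines "e \<equiv> 1 + \<delta> / real (Suc m)" and "e' \<equiv> 1 + \<delta> / real (max m 1)"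
  assumes "0 < \<delta>" "0 < c1" "0 \<le> E1" "0 < c'" "0 \<le> E'"
    and one_dim: "sp_lower_bound c1 (1 + \<delta>) E1 {B::real set. finite B \<and> B \<noteq> {}}"
    and lower_dim: "sp_lower_bound c' e' E' (supported_sets m :: ('a \<Rightarrow> real) set set)"
  shows "sp_lower_bound (min c1 (c' / 2) / real (2 * Suc m) powr e) e (max E1 E' + e)
    (supported_sets (Suc m) :: ('a \<Rightarrow> real) set set)"
  unfolding sp_lower_bound_def
proof
  fix A :: "('a \<Rightarrow> real) set"
  assume "A \<in> supported_sets (Suc m)"
  then obtain I where I: "finite I" "card I = Suc m" and A: "finite A" "A \<noteq> {}" "supported_on I A"
    unfolding supported_sets_def by blast
  obtain X where "X \<subseteq> A" "X \<noteq> {}" "card A \<le> 2 * Suc m * card X"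
    and "min c1 (c' / 2) * real (card X) powr e \<le> log_weight (card X) powr (max E1 E' + e) * sp_card X"
    using exists_large_subset_sp_bound[OF assms(3-7) one_dim lower_dim[unfolded e'_def] I A]
    unfolding e_def by blast
  then show "min c1 (c' / 2) / real (2 * Suc m) powr e * real (card A) powr e
    \<le> log_weight (card A) powr (max E1 E' + e) * sp_card A"
    using A(1) assms(3,4,6,7) by (intro sp_bound_from_large_subset) (auto simp: e_def)
qed

text \<open>For \<open>d = 0\<close> all sets in question are singletons, so any exponent works; \<open>max d 1\<close>
  keeps the exponent of the induction hypothesis at least that of the conclusion.\<close>

lemma sp_lower_bound_supported_sets:
  fixes \<delta> c1 E1 :: real
  assumes "0 < \<delta>" "0 < c1" "0 \<le> E1"
    and one_dim: "sp_lower_bound c1 (1 + \<delta>) E1 {B::real set. finite B \<and> B \<noteq> {}}"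
  shows "\<exists>c>0. \<exists>E\<ge>0.
    sp_lower_bound c (1 + \<delta> / real (max d 1)) E (supported_sets d :: ('a \<Rightarrow> real) set set)"
proof (induction d)
  case 0
  have "sp_lower_bound 1 (1 + \<delta> / real (max 0 1)) 0 (supported_sets 0 :: ('a \<Rightarrow> real) set set)"
    unfolding sp_lower_bound_def
  proof
    fix A :: "('a \<Rightarrow> real) set"
    assume "A \<in> supported_sets 0"
    then have A: "finite A" "A \<noteq> {}" "supported_on {} A"
      unfolding supported_sets_def by auto
    then have "card A = 1"
      using card_le_1_if_supported_on_empty[of A] by (simp add: le_antisym Suc_le_eq card_gt_0_iff)
    then show "1 * real (card A) powr (1 + \<delta> / real (max 0 1)) \<le> log_weight (card A) powr 0 * sp_card A"
      using sp_card_ge_1[OF A(1,2)] by (simp add: log_weight_def)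
  qed
  then show ?case
    by (intro exI[of _ "1 :: real"] exI[of _ "0 :: real"] conjI) simp_all
next
  case (Suc m)
  then obtain c' E' where c': "0 < c'" "0 \<le> E'"
    and lower_dim: "sp_lower_bound c' (1 + \<delta> / real (max m 1)) E' (supported_sets m :: ('a \<Rightarrow> real) set set)"
    by blast
  define e c E where "e = 1 + \<delta> / real (Suc m)"
    and "c = min c1 (c' / 2) / real (2 * Suc m) powr e" and "E = max E1 E' + e"
  have "sp_lower_bound c (1 + \<delta> / real (max (Suc m) 1)) E (supported_sets (Suc m) :: ('a \<Rightarrow> real) set set)"
    using sp_lower_bound_supported_sets_Suc[OF assms(1-3) c' one_dim lower_dim]
    by (simp add: c_def E_def e_def)
  moreover have "0 < c" "0 \<le> E"
    unfolding c_def E_def e_def using assms(1-3) c' by auto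
  ultimately show ?case
    by (intro exI[of _ c] exI[of _ E] conjI)
qed

section \<open>Logarithmic factors in the hypothesis and the conclusion\<close>

lemma sp_card_real: "sp_card B = real (card (real_sumset B)) + real (card (real_prodset B))"
  unfolding sp_card_def pairwise_image_def real_sumset_def real_prodset_def ..

lemma exists_log_weight_ln_powr_lower:
  fixes D :: real
  obtains k E where "0 < k" "k \<le> 1" "0 \<le> E" "\<And>N. 2 \<le> N \<Longrightarrow> k \<le> log_weight N powr E * ln (real N) powr D"
proof (cases "0 \<le> D")
  case True
  show ?thesis
  proof (rule that[of "min 1 (ln 2 powr D)" 0])
    fix N :: nat assume "2 \<le> N"
    then have "ln 2 powr D \<le> ln (real N) powr D" "1 \<le> log_weight N"
      using True by (auto intro: powr_mono2 log_weight_ge_1)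
    then show "min 1 (ln 2 powr D) \<le> log_weight N powr 0 * ln (real N) powr D"
      by simp
  qed auto
next
  case False
  show ?thesis
  proof (rule that[of 1 "- D"])
    fix N :: nat assume "2 \<le> N"
    then have ln: "0 < ln (real N)"
      by simp
    then have "ln (real N) powr (- D) \<le> log_weight N powr (- D)"
      using False unfolding log_weight_def by (intro powr_mono2) auto
    then have "ln (real N) powr (- D) * ln (real N) powr D \<le> log_weight N powr (- D) * ln (real N) powr D"
      by (rule mult_right_mono) simp
    then show "1 \<le> log_weight N powr (- D) * ln (real N) powr D"
      using ln by (simp add: powr_add[symmetric])
  qed (use False in auto)
qed

lemma sp_admissible_imp_sp_lower_bound:
  assumes "sp_admissible \<delta>"
  shows "\<exists>c1>0. \<exists>E1\<ge>0. sp_lower_bound c1 (1 + \<delta>) E1 {B::real set. finite B \<and> B \<noteq> {}}"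
proof -
  obtain C D where C: "0 < C" and adm: "\<And>B::real set. finite B \<Longrightarrow> B \<noteq> {} \<Longrightarrow>
      C * real (card B) powr (1 + \<delta>) * ln (real (card B)) powr D \<le> sp_card B"
    using assms unfolding sp_admissible_def sp_card_real by blast
  obtain k E where k: "0 < k" "k \<le> 1" "0 \<le> E"
    and log: "\<And>N. 2 \<le> N \<Longrightarrow> k \<le> log_weight N powr E * ln (real N) powr D"
    using exists_log_weight_ln_powr_lower[of D] by blast
  have "min 1 C * k * real (card B) powr (1 + \<delta>) \<le> log_weight (card B) powr E * sp_card B"
    if B: "finite B" "B \<noteq> {}" for B :: "real set"
  proof (cases "card B = 1")
    case True
    have "min 1 C * k \<le> 1"
      using C k by (simp add: min_le_iff_disj mult_le_one)
    then show ?thesis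
      using True sp_card_ge_1[OF B] by (simp add: log_weight_def)
  next
    case False
    moreover have "0 < card B"
      using B by (simp add: card_gt_0_iff)
    ultimately have "2 \<le> card B"
      by linarith
    have "min 1 C * k * real (card B) powr (1 + \<delta>) \<le> C * real (card B) powr (1 + \<delta>) * k"
      using C k by (simp add: mult_right_mono)
    also have "\<dots> \<le> C * real (card B) powr (1 + \<delta>) * (log_weight (card B) powr E * ln (real (card B)) powr D)"
      using C by (intro mult_left_mono log[OF \<open>2 \<le> card B\<close>]) auto
    also have "\<dots> \<le> log_weight (card B) powr E * sp_card B"
      using mult_left_mono[OF adm[OF B], of "log_weight (card B) powr E"] by (simp add: ac_simps)
    finally show ?thesis .
  qed
  moreover have "0 < min 1 C * k"
    using C k by simp
  ultimately show ?thesis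
    using k(3) unfolding sp_lower_bound_def by blast
qed

lemma log_weight_le_ln: "2 \<le> N \<Longrightarrow> log_weight N \<le> (1 + 1 / ln 2) * ln (real N)"
proof -
  assume "2 \<le> N"
  then have "ln 2 \<le> ln (real N)"
    by simp
  then have "1 \<le> ln (real N) / ln 2"
    by simp
  then show ?thesis
    unfolding log_weight_def by (simp add: distrib_right)
qed

lemma one_plus_inverse_ln_2_pos: "0 < 1 + 1 / ln (2 :: real)"
proof -
  have "0 < ln (2 :: real)"
    by simp
  then show ?thesis
    by (simp add: add_pos_pos)
qed

lemma ln_powr_bound_of_log_weight_bound:
  fixes c E x S :: real
  assumes "0 \<le> c" "0 \<le> E" "0 \<le> x" "1 \<le> N" and bound: "c * x \<le> log_weight N powr E * S"
  shows "c / (1 + 1 / ln 2) powr E * x * ln (real N) powr (- E) \<le> S"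
proof (cases "N = 1")
  case True
  have "0 \<le> c * x"
    using assms(1,3) by simp
  then have "0 \<le> log_weight N powr E * S"
    using bound by linarith
  then have "0 \<le> S"
    using log_weight_ge_1[OF assms(4)] by (simp add: zero_le_mult_iff)
  then show ?thesis
    using True by simp
next
  case False
  define K where "K = 1 + 1 / ln (2 :: real)"
  have K: "0 < K"
    unfolding K_def by (rule one_plus_inverse_ln_2_pos)
  have ln: "0 < ln (real N)"
    using False assms(4) by simp
  have L: "1 \<le> log_weight N"
    using assms(4) by (rule log_weight_ge_1)
  have "c / K powr E * x * ln (real N) powr (- E) = c * x / (K * ln (real N)) powr E"
    using K ln by (simp add: powr_minus_divide powr_mult)
  also have "\<dots> \<le> c * x / log_weight N powr E"
  proof (rule divide_left_mono)
    show "log_weight N powr E \<le> (K * ln (real N)) powr E"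
      unfolding K_def using False assms(2,4) L by (intro powr_mono2 log_weight_le_ln) auto
  qed (use assms K ln L in auto)
  also have "\<dots> \<le> S"
    using bound L by (simp add: divide_le_eq mult.commute)
  finally show ?thesis
    unfolding K_def .
qed

section \<open>Diagonal matrices\<close>

definition diag_entries :: "real^'n^'n \<Rightarrow> 'n \<Rightarrow> real" where
  "diag_entries M = (\<lambda>i. M $ i $ i)"

lemma matrix_mult_diagonal_entry:
  assumes "diagonal_mat a" "diagonal_mat b"
  shows "(a ** b) $ i $ j = (if i = j then a $ i $ i * b $ i $ i else 0)"
proof -
  have "(a ** b) $ i $ j = (\<Sum>k\<in>UNIV. a $ i $ k * b $ k $ j)"
    by (simp add: matrix_matrix_mult_def)
  also have "\<dots> = (\<Sum>k\<in>UNIV. if k = i then a $ i $ i * b $ i $ j else 0)"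
    using assms(1) by (intro sum.cong) (auto simp: diagonal_mat_def)
  finally show ?thesis
    using assms(2) by (auto simp: diagonal_mat_def)
qed

lemma diagonal_mat_add: "diagonal_mat a \<Longrightarrow> diagonal_mat b \<Longrightarrow> diagonal_mat (a + b)"
  unfolding diagonal_mat_def by simp

lemma diagonal_mat_mult: "diagonal_mat a \<Longrightarrow> diagonal_mat b \<Longrightarrow> diagonal_mat (a ** b)"
  by (subst diagonal_mat_def) (simp add: matrix_mult_diagonal_entry)

lemma inj_on_diag_entries: "inj_on diag_entries {M. diagonal_mat M}"
proof (rule inj_onI)
  fix a b :: "real^'n^'n"
  assume "a \<in> {M. diagonal_mat M}" "b \<in> {M. diagonal_mat M}" "diag_entries a = diag_entries b"
  then have "a $ i $ j = b $ i $ j" for i j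
    unfolding diag_entries_def diagonal_mat_def by (cases "i = j") (auto dest: fun_cong)
  then show "a = b"
    by (simp add: vec_eq_iff)
qed

lemma sp_card_diag_entries:
  assumes "\<forall>M\<in>A. diagonal_mat M"
  shows "sp_card (diag_entries ` A) = real (card (mat_sumset A)) + real (card (mat_prodset A))"
proof -
  have sums: "pairwise_image (+) (diag_entries ` A) = diag_entries ` mat_sumset A"
    unfolding mat_sumset_def pairwise_image_def[symmetric]
    by (rule pairwise_image_image) (simp add: diag_entries_def fun_eq_iff)
  have prods: "pairwise_image (*) (diag_entries ` A) = diag_entries ` mat_prodset A"
    unfolding mat_prodset_def pairwise_image_def[symmetric]
    by (rule pairwise_image_image[where f = "(**)"])
       (use assms in \<open>simp add: diag_entries_def fun_eq_iff matrix_mult_diagonal_entry\<close>)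
  have "mat_sumset A \<subseteq> {M. diagonal_mat M}" "mat_prodset A \<subseteq> {M. diagonal_mat M}"
    using assms unfolding mat_sumset_def mat_prodset_def
    by (auto intro: diagonal_mat_add diagonal_mat_mult)
  then show ?thesis
    unfolding sp_card_def sums prods
    by (simp add: card_image inj_on_subset[OF inj_on_diag_entries])
qed

lemma diag_entries_image_supported_sets:
  fixes A :: "(real^'n^'n) set"
  assumes "finite A" "A \<noteq> {}" "\<forall>M\<in>A. diagonal_mat M"
  shows "diag_entries ` A \<in> supported_sets CARD('n)" and "card (diag_entries ` A) = card A"
proof -
  show "card (diag_entries ` A) = card A"
    using assms(3) by (intro card_image inj_on_subset[OF inj_on_diag_entries]) auto
  show "diag_entries ` A \<in> supported_sets CARD('n)"
    using assms(1,2) by (intro supported_setsI[of UNIV]) (auto simp: supported_on_def)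
qed

theorem theorem1p2:
  fixes \<delta>1 :: real
  assumes "\<delta>1 > 0"
    and "sp_admissible \<delta>1"
  shows "\<exists>C>0. \<exists>D::real. \<forall>A :: (real^'n::finite^'n) set.
           finite A \<and> A \<noteq> {} \<and> (\<forall>M\<in>A. diagonal_mat M) \<longrightarrow>
             real (card (mat_sumset A)) + real (card (mat_prodset A))
               \<ge> C * real (card A) powr (1 + \<delta>1 / real CARD('n))
                   * ln (real (card A)) powr D"
proof -
  obtain c1 E1 where "0 < c1" "0 \<le> E1"
    and "sp_lower_bound c1 (1 + \<delta>1) E1 {B::real set. finite B \<and> B \<noteq> {}}"
    using sp_admissible_imp_sp_lower_bound[OF assms(2)] by blast
  then obtain c E where c: "0 < c" "0 \<le> E" and bound:
      "sp_lower_bound c (1 + \<delta>1 / real (max CARD('n) 1)) E (supported_sets CARD('n) :: ('n \<Rightarrow> real) set set)"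
    using sp_lower_bound_supported_sets[OF assms(1)] by blast
  have max_card: "max CARD('n) 1 = CARD('n)"
    using finite_UNIV_card_ge_0[where 'a = 'n] by simp
  have "c / (1 + 1 / ln 2) powr E * real (card A) powr (1 + \<delta>1 / real CARD('n)) * ln (real (card A)) powr (- E)
      \<le> real (card (mat_sumset A)) + real (card (mat_prodset A))"
    if A: "finite A" "A \<noteq> {}" "\<forall>M\<in>A. diagonal_mat M" for A :: "(real^'n^'n) set"
  proof (rule ln_powr_bound_of_log_weight_bound)
    show "c * real (card A) powr (1 + \<delta>1 / real CARD('n))
        \<le> log_weight (card A) powr E * (real (card (mat_sumset A)) + real (card (mat_prodset A)))"
      using sp_lower_boundD[OF bound diag_entries_image_supported_sets(1)[OF A]]
      by (simp add: diag_entries_image_supported_sets(2)[OF A] sp_card_diag_entries[OF A(3)] max_card)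
  qed (use c A in \<open>auto simp: Suc_le_eq card_gt_0_iff\<close>)
  moreover have "0 < c / (1 + 1 / ln 2) powr E"
    using c one_plus_inverse_ln_2_pos by simp
  ultimately show ?thesis
    by blast
qed

end
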